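(* Let $q$ be a complex number with $|q|<1$. Then \[ \sum_{i,j\geq0}\frac{q^{i^2-ij+j^2}}{(q;q)_i(q;q)_j}=\frac{(-q,-q,q^2;q^2)_\infty}{(q;q)_\infty}, \] \[ \sum_{i,j,k\geq0}\frac{q^{i^2+j^2+k^2+ik+jk}}{(q;q)_i(q;q)_j(q;q)_k}=\frac{(-q,-q,q^2;q^2)_\infty}{(q;q)_\infty}, \] and for every integer $\ell\geq4$, \[ \sum_{n_1,n_2,\dots,n_\ell\geq0}\frac{q^{Q(n_1,\dots,n_\ell)}}{(q;q)_{n_1}(q;q)_{n_2}\cdots(q;q)_{n_\ell}}=\frac{(-q,-q,q^2;q^2)_\infty}{(q;q)_\infty}, \] where, writing $A=n_1+n_3+n_4+\cdots+n_\ell$ and $B=n_2+n_3+n_4+\cdots+n_\ell$, \[ Q(n_1,\dots,n_\ell)=A^2-AB+B^2+\sum_{i=4}^{\ell}(n_1+n_i+n_{i+1}+\cdots+n_\ell)(n_2+n_i+n_{i+1}+\cdots+n_\ell)+n_1n_2 . \]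
   Context: The $q$-shifted factorials are defined by $(a;q)_0=1$, $(a;q)_n=\prod_{k=0}^{n-1}(1-aq^k)$ for $n\geq 1$, and $(a;q)_\infty=\prod_{k=0}^{\infty}(1-aq^k)$. Products are abbreviated as $(a_1,\dots,a_m;q)_\infty=(a_1;q)_\infty\cdots(a_m;q)_\infty$. *)

theory Defs
  imports "HOL-Analysis.Analysis"
begin

definition qpoch :: "complex \<Rightarrow> complex \<Rightarrow> nat \<Rightarrow> complex" where
  "qpoch a q n = (\<Prod>k<n. 1 - a * q ^ k)"

definition qpoch_inf :: "complex \<Rightarrow> complex \<Rightarrow> complex" where
  "qpoch_inf a q = (\<Prod>k. 1 - a * q ^ k)"

definition Qform :: "nat \<Rightarrow> (nat \<Rightarrow> nat) \<Rightarrow> int" where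
  "Qform l n = (let A = int (n 1) + (\<Sum>i=3..l. int (n i));
                    B = int (n 2) + (\<Sum>i=3..l. int (n i))
                in A^2 - A*B + B^2
                   + (\<Sum>i=4..l. (int (n 1) + (\<Sum>j=i..l. int (n j))) *
                                 (int (n 2) + (\<Sum>j=i..l. int (n j))))
                   + int (n 1) * int (n 2))"

end

(*
  Grouping the (l+1)-tuples by (n_1 + n_(l+1), n_2 + n_(l+1), n_3, ..., n_l) raises the exponent
  by n_1 n_2 only, and the finite identity

    sum_k q^((a-k)(b-k)) / ((q)_(a-k) (q)_(b-k) (q)_k) = 1 / ((q)_a (q)_b)

  sums each fibre. So every l-fold sum collapses to the double sum of
  q^(i^2-ij+j^2) / ((q)_i (q)_j), the second identity being the case l = 3.
  Splitting the double sum at the diagonal and writing the larger index as the smaller one plus d,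
  the exponent becomes d^2 + j(j+d); the Durfee rectangle identity

    sum_j q^(j(j+d)) / ((q)_j (q)_(j+d)) = 1 / (q;q)_oo

  leaves sum_(d in Z) q^(d^2) / (q;q)_oo, and Jacobi's triple product, obtained as a limit of the
  q-binomial theorem, turns the theta series into (-q,-q,q^2;q^2)_oo. Absolute convergence follows
  by comparing each sum with the same sum at |q|, whose value the same identities provide.
*)

theory Submission
  imports Defs
begin

section \<open>q-Pochhammer symbols\<close>

lemma qpoch_0 [simp]: "qpoch a q 0 = 1"
  by (simp add: qpoch_def)

lemma qpoch_Suc: "qpoch a q (Suc n) = qpoch a q n * (1 - a * q ^ n)"
  by (simp add: qpoch_def)

lemma qpoch_q_Suc: "qpoch q q (Suc m) = qpoch q q m * (1 - q ^ Suc m)"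
  by (simp add: qpoch_Suc)

lemma one_minus_power_nonzero:
  assumes "\<And>k. qpoch q q k \<noteq> 0"
  shows "1 - q ^ Suc m \<noteq> 0"
  using assms[of "Suc m"] by (simp add: qpoch_q_Suc)

lemma qpoch_nonzero:
  fixes q :: complex
  assumes "norm q < 1"
  shows "qpoch q q n \<noteq> 0"
proof -
  have "norm (q * q ^ k) < 1" for k
    using assms power_less_one_iff[of "norm q" "Suc k"] by (simp add: norm_mult norm_power)
  then have "1 - q * q ^ k \<noteq> 0" for k
    by (metis eq_iff_diff_eq_0 norm_one less_irrefl)
  then show ?thesis
    by (simp add: qpoch_def)
qed

lemma convergent_prod_qpoch:
  fixes q :: complex
  assumes "norm q < 1"
  shows "convergent_prod (\<lambda>k. 1 - a * q ^ k)"
proof (rule abs_convergent_prod_imp_convergent_prod, rule summable_imp_abs_convergent_prod)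
  show "summable (\<lambda>k. norm (1 - a * q ^ k - 1))"
    using assms by (simp add: norm_mult norm_power summable_geometric)
qed

lemma LIMSEQ_qpoch:
  fixes q :: complex
  assumes "norm q < 1"
  shows "(\<lambda>n. qpoch a q n) \<longlonglongrightarrow> qpoch_inf a q"
proof -
  have "(\<lambda>n. qpoch a q (Suc n)) \<longlonglongrightarrow> qpoch_inf a q"
    using convergent_prod_LIMSEQ[OF convergent_prod_qpoch[OF assms]]
    by (simp add: qpoch_def qpoch_inf_def lessThan_Suc_atMost)
  then show ?thesis
    by (rule LIMSEQ_imp_Suc)
qed

lemma qpoch_inf_nonzero:
  fixes q :: complex
  assumes "norm q < 1"
  shows "qpoch_inf q q \<noteq> 0"
proof -
  have "1 - q * q ^ k \<noteq> 0" for k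
    using qpoch_nonzero[OF assms, of "Suc k"] by (simp add: qpoch_Suc)
  then show ?thesis
    unfolding qpoch_inf_def by (intro prodinf_nonzero convergent_prod_qpoch assms)
qed

text \<open>A convergent sequence of nonzero numbers with nonzero limit is bounded away from zero.\<close>
lemma qpoch_norm_bounds:
  fixes q :: complex
  assumes "norm q < 1"
  obtains L U where "0 < L" "\<And>n. L \<le> norm (qpoch q q n)" "\<And>n. norm (qpoch q q n) \<le> U"
proof -
  have lim: "(\<lambda>n. qpoch q q n) \<longlonglongrightarrow> qpoch_inf q q"
    by (rule LIMSEQ_qpoch[OF assms])
  obtain U where U: "\<And>n. norm (qpoch q q n) \<le> U"
    using convergent_imp_Bseq[OF convergentI[OF lim]] by (metis BseqE)
  have "(\<lambda>n. inverse (qpoch q q n)) \<longlonglongrightarrow> inverse (qpoch_inf q q)"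
    by (intro tendsto_inverse lim qpoch_inf_nonzero assms)
  then obtain K where K: "0 < K" "\<And>n. norm (inverse (qpoch q q n)) \<le> K"
    using convergent_imp_Bseq[OF convergentI] by (metis BseqE)
  have "1 / K \<le> norm (qpoch q q n)" for n
  proof -
    have "inverse (norm (qpoch q q n)) \<le> K"
      using K(2)[of n] by (simp add: norm_inverse)
    then show ?thesis
      using K(1) qpoch_nonzero[OF assms, of n] by (simp add: field_simps)
  qed
  with K U show thesis
    using that[of "1 / K" U] by simp
qed

section \<open>Infinite sums\<close>

lemma sums_tannery:
  fixes a :: "nat \<Rightarrow> nat \<Rightarrow> 'a::{real_normed_algebra,banach}"
  assumes limit: "\<And>k. (\<lambda>n. a k n) \<longlonglongrightarrow> c k"
    and bound: "\<And>k n. norm (a k n) \<le> M k"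
    and M: "summable M"
    and sums: "(\<lambda>n. \<Sum>k. a k n) \<longlonglongrightarrow> s"
  shows "c sums s" and "summable (\<lambda>k. norm (c k))"
proof -
  have "eventually (\<lambda>(k, n). norm (a k n) \<le> M k) (at_top \<times>\<^sub>F sequentially)"
    using bound by (simp add: always_eventually)
  then have T: "summable (\<lambda>k. norm (c k)) \<and> (\<lambda>n. \<Sum>k. a k n) \<longlonglongrightarrow> suminf c"
    using tannerys_theorem[OF limit _ M] by simp
  then show "summable (\<lambda>k. norm (c k))"
    by simp
  have "suminf c = s"
    using T sums LIMSEQ_unique by blast
  with T show "c sums s"
    using summable_norm_cancel summable_sums by blast
qed

lemma has_sum_Suc_shift:
  fixes f :: "nat \<Rightarrow> 'a::topological_ab_group_add"
  assumes "(f has_sum S) UNIV"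
  shows "((\<lambda>n. f (Suc n)) has_sum (S - f 0)) UNIV"
proof -
  have "(f has_sum (S - f 0)) (UNIV - {0})"
    by (rule has_sum_Diff[OF assms has_sum_finiteI]) simp_all
  moreover have "UNIV - {0} = range Suc"
    by (auto simp: greaterThan_0[symmetric])
  ultimately show ?thesis
    using has_sum_reindex[of Suc UNIV f] by (simp add: o_def)
qed

lemma has_sum_fiberwise:
  fixes f :: "'a \<Rightarrow> complex" and M :: "'a \<Rightarrow> real"
  assumes h: "\<And>x. x \<in> A \<Longrightarrow> h x \<in> B"
    and finite: "\<And>y. y \<in> B \<Longrightarrow> finite {x\<in>A. h x = y}"
    and f: "\<And>y. y \<in> B \<Longrightarrow> (\<Sum>x\<in>{x\<in>A. h x = y}. f x) = g y"
    and M: "\<And>y. y \<in> B \<Longrightarrow> (\<Sum>x\<in>{x\<in>A. h x = y}. M x) = G y"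
    and G: "G summable_on B"
    and f_le_M: "\<And>x. x \<in> A \<Longrightarrow> norm (f x) \<le> M x"
    and g: "(g has_sum S) B"
  shows "(f has_sum S) A"
proof -
  define C where "C = Sigma B (\<lambda>y. {x\<in>A. h x = y})"
  have bij: "bij_betw (\<lambda>x. (h x, x)) A C"
    unfolding C_def by (rule bij_betwI[where g = snd]) (auto simp: h)
  have M_nonneg: "0 \<le> M x" if "x \<in> A" for x
    using f_le_M[OF that] norm_ge_zero order_trans by blast
  have "(\<lambda>(y, x). M x) summable_on C"
    unfolding C_def
  proof (rule summable_on_SigmaI[OF _ G])
    show "((\<lambda>x. case (y, x) of (y, x) \<Rightarrow> M x) has_sum G y) {x\<in>A. h x = y}" if "y \<in> B" for y
      using finite[OF that] M[OF that] by (auto intro: has_sum_finiteI)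
  qed (use M_nonneg in auto)
  then have "M summable_on A"
    using summable_on_reindex_bij_betw[OF bij, of "\<lambda>(y, x). M x"] by simp
  then have "(\<lambda>x. norm (f x)) summable_on A"
    by (rule summable_on_comparison_test) (use f_le_M in auto)
  then have "(\<lambda>(y, x). f x) summable_on C"
    using Infinite_Sum.abs_summable_summable summable_on_reindex_bij_betw[OF bij, of "\<lambda>(y, x). f x"] by auto
  then have "((\<lambda>(y, x). f x) has_sum S) C"
    unfolding C_def
  proof (rule has_sum_SigmaI[rotated 2])
    show "((\<lambda>x. case (y, x) of (y, x) \<Rightarrow> f x) has_sum g y) {x\<in>A. h x = y}" if "y \<in> B" for y
      using finite[OF that] f[OF that] by (auto intro: has_sum_finiteI)
  qed (rule g)
  then show ?thesis
    using has_sum_reindex_bij_betw[OF bij, of "\<lambda>(y, x). f x"] by simp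
qed

section \<open>q-binomial coefficients\<close>

text \<open>Vanishing for \<open>j > m\<close> makes the Pascal rule \<open>qbinom_Suc\<close> hold for all \<open>j\<close>.\<close>
definition qbinom :: "complex \<Rightarrow> nat \<Rightarrow> nat \<Rightarrow> complex" where
  "qbinom q m j = (if j \<le> m then qpoch q q m / (qpoch q q j * qpoch q q (m - j)) else 0)"

lemma qbinom_0: "qpoch q q m \<noteq> 0 \<Longrightarrow> qbinom q m 0 = 1"
  by (simp add: qbinom_def)

lemma qbinom_symmetric: "j \<le> m \<Longrightarrow> qbinom q m (m - j) = qbinom q m j"
  by (simp add: qbinom_def mult.commute)

lemma qbinom_Suc:
  fixes q :: complex
  assumes nz: "\<And>k. qpoch q q k \<noteq> 0"
  shows "qbinom q (Suc m) j = q ^ j * qbinom q m j + (if j = 0 then 0 else qbinom q m (j - 1))"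
proof (cases "j = 0 \<or> m < j")
  case True
  then show ?thesis
    using nz by (auto simp: qbinom_def le_Suc_eq)
next
  case False
  then obtain c d where j: "j = Suc c" "m = j + d"
    by (metis not0_implies_Suc le_add_diff_inverse not_less)
  define A where "A = qpoch q q m / (qpoch q q c * qpoch q q d)"
  have Pj: "qpoch q q j = qpoch q q c * (1 - q ^ j)"
    using j(1) qpoch_q_Suc[of q c] by simp
  have "qbinom q (Suc m) j = qpoch q q (Suc m) / (qpoch q q j * qpoch q q (Suc d))"
    using j by (simp add: qbinom_def)
  also have "\<dots> = A * (1 - q ^ Suc m) / ((1 - q ^ j) * (1 - q ^ Suc d))"
    unfolding qpoch_q_Suc[of q m] qpoch_q_Suc[of q d] Pj A_def by (simp add: mult_ac)
  also have "q ^ Suc m = q ^ j * q ^ Suc d"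
    using j by (simp add: power_add[symmetric])
  finally have "qbinom q (Suc m) j = A * (1 - q ^ j * q ^ Suc d) / ((1 - q ^ j) * (1 - q ^ Suc d))" .
  moreover have "qbinom q m j = A / (1 - q ^ j)"
    unfolding qbinom_def Pj A_def using j by (simp add: mult_ac)
  moreover have "qbinom q m (j - 1) = A / (1 - q ^ Suc d)"
  proof -
    have "m - c = Suc d"
      using j by simp
    then show ?thesis
      using j by (simp add: qbinom_def A_def qpoch_q_Suc mult_ac)
  qed
  moreover have "A * (1 - \<alpha> * \<beta>) / ((1 - \<alpha>) * (1 - \<beta>)) = \<alpha> * (A / (1 - \<alpha>)) + A / (1 - \<beta>)"
    if "1 - \<alpha> \<noteq> 0" "1 - \<beta> \<noteq> 0" for \<alpha> \<beta> :: complex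
    using that by (simp add: field_simps)
  ultimately show ?thesis
    using j(1) one_minus_power_nonzero[OF nz, of c] one_minus_power_nonzero[OF nz, of d]
    by (simp del: power_Suc)
qed

theorem q_binomial_theorem:
  fixes q x y :: complex
  assumes nz: "\<And>k. qpoch q q k \<noteq> 0"
  shows "(\<Prod>i<m. x + y * q ^ i) = (\<Sum>j\<le>m. qbinom q m j * q ^ (j choose 2) * y ^ j * x ^ (m - j))"
proof (induction m arbitrary: y)
  case 0
  then show ?case by (simp add: qbinom_def numeral_2_eq_2)
next
  case (Suc m)
  define c where "c j = qbinom q m j * q ^ ((j choose 2) + j) * y ^ j" for j
  have "(\<Prod>i<Suc m. x + y * q ^ i) = (x + y) * (\<Prod>i<m. x + (y * q) * q ^ i)"
    by (simp only: prod.lessThan_Suc_shift) (simp add: mult_ac)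
  also have "\<dots> = (x + y) * (\<Sum>j\<le>m. c j * x ^ (m - j))"
    unfolding Suc.IH c_def by (simp add: power_add power_mult_distrib mult_ac)
  also have "\<dots> = (\<Sum>j\<le>m. c j * x ^ (Suc m - j)) + (\<Sum>j\<le>m. c j * y * x ^ (m - j))"
    by (simp add: algebra_simps sum_distrib_left sum.distrib Suc_diff_le)
  also have "(\<Sum>j\<le>m. c j * x ^ (Suc m - j))
             = (\<Sum>j\<le>Suc m. q ^ j * qbinom q m j * q ^ (j choose 2) * y ^ j * x ^ (Suc m - j))"
    by (simp add: c_def qbinom_def power_add mult_ac)
  also have "(\<Sum>j\<le>m. c j * y * x ^ (m - j))
             = (\<Sum>j\<le>Suc m. (if j = 0 then 0 else qbinom q m (j - 1)) * q ^ (j choose 2) * y ^ j * x ^ (Suc m - j))"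
    by (simp only: sum.atMost_Suc_shift) (simp add: c_def power_add mult_ac numeral_2_eq_2)
  finally show ?case
    by (simp add: qbinom_Suc[OF nz] sum.distrib[symmetric] algebra_simps)
qed

lemma qbinom_bounded:
  fixes q :: complex
  assumes "norm q < 1"
  obtains C where "\<And>m j. norm (qbinom q m j) \<le> C"
proof -
  obtain L U where L: "0 < L" "\<And>k. L \<le> norm (qpoch q q k)" and U: "\<And>k. norm (qpoch q q k) \<le> U"
    using qpoch_norm_bounds[OF assms] by metis
  have "norm (qbinom q m j) \<le> U / (L * L)" for m j
  proof (cases "j \<le> m")
    case True
    have "L * L \<le> norm (qpoch q q j) * norm (qpoch q q (m - j))"
      using L by (simp add: mult_mono)
    then show ?thesis
      using True L U[of m] U[of 0] by (auto simp: qbinom_def norm_mult norm_divide intro!: frac_le)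
  qed (use L U[of 0] in \<open>simp add: qbinom_def\<close>)
  then show thesis
    using that by blast
qed

lemma qbinom_tendsto:
  fixes q :: complex
  assumes "norm q < 1"
  shows "(\<lambda>m. qbinom q m j) \<longlonglongrightarrow> 1 / qpoch q q j"
proof -
  have "(\<lambda>m. qpoch q q m / (qpoch q q j * qpoch q q (m - j)))
          \<longlonglongrightarrow> qpoch_inf q q / (qpoch q q j * qpoch_inf q q)"
    using LIMSEQ_qpoch[OF assms] seq_offset_neg[OF LIMSEQ_qpoch[OF assms]] qpoch_nonzero[OF assms]
      qpoch_inf_nonzero[OF assms]
    by (intro tendsto_divide tendsto_mult tendsto_const) auto
  then have "(\<lambda>m. qpoch q q m / (qpoch q q j * qpoch q q (m - j))) \<longlonglongrightarrow> 1 / qpoch q q j"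
    using qpoch_inf_nonzero[OF assms] by simp
  then show ?thesis
    by (rule Lim_transform_eventually) (auto simp: qbinom_def eventually_sequentially)
qed

lemma qbinom_central_tendsto:
  fixes q :: complex
  assumes "norm q < 1"
  shows "(\<lambda>n. qbinom q (2 * n) (n - k)) \<longlonglongrightarrow> 1 / qpoch_inf q q"
proof -
  have lim: "qpoch q q \<longlonglongrightarrow> qpoch_inf q q"
    by (rule LIMSEQ_qpoch[OF assms])
  have "(\<lambda>n. qpoch q q (2 * n)) \<longlonglongrightarrow> qpoch_inf q q"
    using LIMSEQ_subseq_LIMSEQ[OF lim, of "\<lambda>n. 2 * n"] by (simp add: strict_mono_def o_def)
  then have "(\<lambda>n. qpoch q q (2 * n) / (qpoch q q (n - k) * qpoch q q (n + k)))
               \<longlonglongrightarrow> qpoch_inf q q / (qpoch_inf q q * qpoch_inf q q)"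
    using seq_offset_neg[OF lim] LIMSEQ_ignore_initial_segment[OF lim] qpoch_inf_nonzero[OF assms]
    by (intro tendsto_divide tendsto_mult) auto
  then have "(\<lambda>n. qpoch q q (2 * n) / (qpoch q q (n - k) * qpoch q q (n + k))) \<longlonglongrightarrow> 1 / qpoch_inf q q"
    using qpoch_inf_nonzero[OF assms] by simp
  then show ?thesis
    by (rule Lim_transform_eventually) (auto simp: qbinom_def eventually_sequentially mult_2 intro!: exI[of _ k])
qed

section \<open>Durfee rectangles\<close>

definition durfee_term :: "complex \<Rightarrow> nat \<Rightarrow> nat \<Rightarrow> nat \<Rightarrow> complex" where
  "durfee_term q p n b = q ^ (b * (b + n)) / (qpoch q q (p - b) * qpoch q q b * qpoch q q (b + n))"

lemma durfee_term_Suc_p: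
  assumes nz: "\<And>k. qpoch q q k \<noteq> 0" and "b \<le> Suc p"
  shows "(if b \<le> p then durfee_term q p n b else 0) = (1 - q ^ (Suc p - b)) * durfee_term q (Suc p) n b"
proof (cases "b \<le> p")
  case True
  then have "Suc p - b = Suc (p - b)"
    by simp
  with True show ?thesis
    using nz one_minus_power_nonzero[OF nz, of "p - b"]
    by (simp add: durfee_term_def qpoch_q_Suc field_simps)
qed (use assms(2) in \<open>simp add: durfee_term_def\<close>)

lemma durfee_term_Suc_n:
  assumes nz: "\<And>k. qpoch q q k \<noteq> 0" and "b \<le> Suc p"
  shows "(if 1 \<le> b then q ^ (n + p + 1) * durfee_term q p (n + 1) (b - 1) else 0)
         = q ^ (Suc p - b) * (1 - q ^ b) * durfee_term q (Suc p) n b"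
proof (cases "b = 0")
  case False
  define c where "c = b - 1"
  define D where "D = qpoch q q (p - c) * qpoch q q c * qpoch q q (b + n)"
  have b: "b = Suc c" "Suc p - b = p - c" "c + (n + 1) = b + n"
    using False assms(2) by (simp_all add: c_def)
  have "1 - q ^ b \<noteq> 0"
    using one_minus_power_nonzero[OF nz, of c] by (simp add: b(1))
  have "(p - c) + b * (b + n) = (n + p + 1) + c * (c + (n + 1))"
    using assms(2) b(1) by (simp add: algebra_simps)
  then have exponent: "q ^ (p - c) * q ^ (b * (b + n)) = q ^ (n + p + 1) * q ^ (c * (c + (n + 1)))"
    by (simp only: power_add[symmetric])
  have "q ^ (Suc p - b) * (1 - q ^ b) * durfee_term q (Suc p) n b
        = q ^ (p - c) * (1 - q ^ b) * (q ^ (b * (b + n)) / (D * (1 - q ^ b)))"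
    unfolding durfee_term_def D_def b(2)
    by (subst (3) b(1), subst qpoch_q_Suc) (simp add: b(1)[symmetric] mult_ac)
  also have "\<dots> = q ^ (p - c) * q ^ (b * (b + n)) / D"
    using \<open>1 - q ^ b \<noteq> 0\<close> by simp
  also have "\<dots> = q ^ (n + p + 1) * durfee_term q p (n + 1) (b - 1)"
    unfolding exponent durfee_term_def D_def c_def[symmetric] b(3) by simp
  finally show ?thesis
    using False by simp
qed (simp add: durfee_term_def)

text \<open>Splitting \<open>1 - q\<^sup>p\<^sup>+\<^sup>1 = (1 - q\<^sup>p\<^sup>+\<^sup>1\<^sup>-\<^sup>b) + q\<^sup>p\<^sup>+\<^sup>1\<^sup>-\<^sup>b (1 - q\<^sup>b)\<close> termwise gives a Pascal-type recurrence.\<close>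
lemma sum_durfee_term_Suc:
  assumes nz: "\<And>k. qpoch q q k \<noteq> 0"
  shows "(1 - q ^ Suc p) * (\<Sum>b\<le>Suc p. durfee_term q (Suc p) n b)
         = (\<Sum>b\<le>p. durfee_term q p n b) + q ^ (n + p + 1) * (\<Sum>b\<le>p. durfee_term q p (n + 1) b)"
proof -
  have "(1 - q ^ Suc p) * durfee_term q (Suc p) n b
        = (1 - q ^ (Suc p - b)) * durfee_term q (Suc p) n b
          + q ^ (Suc p - b) * (1 - q ^ b) * durfee_term q (Suc p) n b" if "b \<le> Suc p" for b
  proof -
    have "q ^ (Suc p - b) * q ^ b = q ^ Suc p"
      using that by (simp add: power_add[symmetric])
    then show ?thesis
      by (simp add: algebra_simps)
  qed
  then have "(1 - q ^ Suc p) * (\<Sum>b\<le>Suc p. durfee_term q (Suc p) n b)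
        = (\<Sum>b\<le>Suc p. (if b \<le> p then durfee_term q p n b else 0)
              + (if 1 \<le> b then q ^ (n + p + 1) * durfee_term q p (n + 1) (b - 1) else 0))"
    unfolding sum_distrib_left using durfee_term_Suc_p[OF nz] durfee_term_Suc_n[OF nz]
    by (intro sum.cong) auto
  also have "\<dots> = (\<Sum>b\<le>p. durfee_term q p n b) + q ^ (n + p + 1) * (\<Sum>b\<le>p. durfee_term q p (n + 1) b)"
  proof -
    have "(\<Sum>b\<le>Suc p. if b \<le> p then durfee_term q p n b else 0) = (\<Sum>b\<le>p. durfee_term q p n b)"
      by (simp add: sum.atMost_Suc)
    moreover have "(\<Sum>b\<le>Suc p. if 1 \<le> b then q ^ (n + p + 1) * durfee_term q p (n + 1) (b - 1) else 0)
                   = q ^ (n + p + 1) * (\<Sum>b\<le>p. durfee_term q p (n + 1) b)"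
      by (simp only: sum.atMost_Suc_shift) (simp add: sum_distrib_left)
    ultimately show ?thesis
      by (simp add: sum.distrib)
  qed
  finally show ?thesis .
qed

lemma sum_durfee_finite:
  fixes q :: complex
  assumes nz: "\<And>k. qpoch q q k \<noteq> 0"
  shows "(\<Sum>b\<le>p. durfee_term q p n b) = 1 / (qpoch q q p * qpoch q q (p + n))"
proof (induction p arbitrary: n)
  case 0
  then show ?case
    by (simp add: durfee_term_def)
next
  case (Suc p)
  have "1 / (A * B) + \<gamma> / (A * (B * (1 - \<gamma>))) = 1 / (A * (B * (1 - \<gamma>)))"
    if "A \<noteq> 0" "B \<noteq> 0" "1 - \<gamma> \<noteq> 0" for A B \<gamma> :: complex
    using that by (simp add: field_simps)
  then have "1 / (qpoch q q p * qpoch q q (p + n)) + q ^ (n + p + 1) / (qpoch q q p * qpoch q q (p + (n + 1)))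
             = 1 / (qpoch q q p * qpoch q q (Suc p + n))"
    using nz[of p] nz[of "p + n"] one_minus_power_nonzero[OF nz, of "p + n"]
    by (simp add: qpoch_q_Suc add.commute[of n p])
  then have "(1 - q ^ Suc p) * (\<Sum>b\<le>Suc p. durfee_term q (Suc p) n b) = 1 / (qpoch q q p * qpoch q q (Suc p + n))"
    unfolding sum_durfee_term_Suc[OF nz] Suc.IH by simp
  then have "(\<Sum>b\<le>Suc p. durfee_term q (Suc p) n b) = 1 / (qpoch q q p * qpoch q q (Suc p + n)) / (1 - q ^ Suc p)"
    using one_minus_power_nonzero[OF nz, of p] by (metis nonzero_mult_div_cancel_left)
  then show ?case
    by (simp add: qpoch_q_Suc mult_ac)
qed

lemma sum_qpoch_rectangle:
  fixes q :: complex
  assumes nz: "\<And>k. qpoch q q k \<noteq> 0"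
  shows "(\<Sum>k\<le>min a b. q ^ ((a - k) * (b - k)) / (qpoch q q (a - k) * qpoch q q (b - k) * qpoch q q k))
         = 1 / (qpoch q q a * qpoch q q b)"
proof -
  have *: "(\<Sum>k\<le>b. q ^ ((a - k) * (b - k)) / (qpoch q q (a - k) * qpoch q q (b - k) * qpoch q q k))
           = 1 / (qpoch q q a * qpoch q q b)" if "b \<le> a" for a b
  proof -
    obtain n where a: "a = b + n"
      using \<open>b \<le> a\<close> le_Suc_ex by blast
    have "(\<Sum>k\<le>b. q ^ ((a - k) * (b - k)) / (qpoch q q (a - k) * qpoch q q (b - k) * qpoch q q k))
          = (\<Sum>j\<le>b. durfee_term q b n j)"
      by (rule sum.reindex_bij_witness[where i="\<lambda>j. b - j" and j="\<lambda>k. b - k"])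
         (auto simp: a durfee_term_def mult_ac)
    also have "\<dots> = 1 / (qpoch q q a * qpoch q q b)"
      unfolding sum_durfee_finite[OF nz] a by (simp add: mult_ac)
    finally show ?thesis .
  qed
  show ?thesis
  proof (cases "b \<le> a")
    case False
    then have "min a b = a" "a \<le> b"
      by simp_all
    then show ?thesis
      using *[of a b] by (simp add: mult.commute)
  qed (simp add: *)
qed

text \<open>Let \<open>p \<rightarrow> \<infinity>\<close> in \<open>sum_durfee_finite\<close> multiplied by \<open>(q;q)\<^sub>p\<close>.\<close>
lemma durfee_has_sum:
  fixes q :: complex
  assumes q: "norm q < 1"
  shows "((\<lambda>b. q ^ (b * (b + n)) / (qpoch q q b * qpoch q q (b + n))) has_sum (1 / qpoch_inf q q)) UNIV"
proof -
  obtain L where L: "0 < L" "\<And>k. L \<le> norm (qpoch q q k)"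
    using qpoch_norm_bounds[OF q] by metis
  obtain C where C: "\<And>m j. norm (qbinom q m j) \<le> C"
    using qbinom_bounded[OF q] by metis
  define c where "c b = q ^ (b * (b + n)) / (qpoch q q b * qpoch q q (b + n))" for b
  define a where "a b p = qbinom q p b * (q ^ (b * (b + n)) / qpoch q q (b + n))" for b p
  have limit: "(\<lambda>p. a b p) \<longlonglongrightarrow> c b" for b
    using tendsto_mult_right[OF qbinom_tendsto[OF q, of b], of "q ^ (b * (b + n)) / qpoch q q (b + n)"]
    unfolding a_def c_def by (simp add: mult_ac)
  have bound: "norm (a b p) \<le> C * (norm q ^ b / L)" for b p
  proof -
    have "norm q ^ (b * (b + n)) \<le> norm q ^ b"
      using q by (intro power_decreasing) auto
    then have "norm (q ^ (b * (b + n)) / qpoch q q (b + n)) \<le> norm q ^ b / L"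
      using L by (auto simp: norm_divide norm_power intro!: frac_le)
    then show ?thesis
      unfolding a_def norm_mult using C by (intro mult_mono) (auto intro: order_trans[OF norm_ge_zero])
  qed
  have "(\<Sum>b. a b p) = (\<Sum>b\<le>p. a b p)" for p
    by (rule suminf_finite) (simp_all add: a_def qbinom_def)
  also have "\<dots>p = qpoch q q p * (\<Sum>b\<le>p. durfee_term q p n b)" for p
    unfolding sum_distrib_left by (intro sum.cong) (simp_all add: a_def qbinom_def durfee_term_def)
  also have "\<dots>p = 1 / qpoch q q (p + n)" for p
    using qpoch_nonzero[OF q] by (simp add: sum_durfee_finite)
  finally have "(\<lambda>p. \<Sum>b. a b p) = (\<lambda>p. 1 / qpoch q q (p + n))"
    by (rule ext)
  moreover have "(\<lambda>p. 1 / qpoch q q (p + n)) \<longlonglongrightarrow> 1 / qpoch_inf q q"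
    by (intro tendsto_intros LIMSEQ_ignore_initial_segment[OF LIMSEQ_qpoch[OF q]] qpoch_inf_nonzero[OF q])
  moreover have "summable (\<lambda>b. C * (norm q ^ b / L))"
    using q by (intro summable_mult summable_divide summable_geometric) simp
  ultimately have "c sums (1 / qpoch_inf q q)" "summable (\<lambda>b. norm (c b))"
    using sums_tannery[where M = "\<lambda>b. C * (norm q ^ b / L)", OF limit bound] by simp_all
  then show ?thesis
    unfolding c_def by (intro norm_summable_imp_has_sum)
qed

section \<open>Jacobi's triple product for the theta series\<close>

lemma sum_double_symmetric:
  fixes g h :: "nat \<Rightarrow> 'a::comm_ring_1"
  assumes "\<And>k. k \<le> n \<Longrightarrow> g (n - k) = h k" and "\<And>k. k \<le> n \<Longrightarrow> g (n + k) = h k"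
  shows "(\<Sum>j\<le>2 * n. g j) = 2 * (\<Sum>k\<le>n. h k) - h 0"
proof -
  have "(\<Sum>j\<le>2 * n. g j) = (\<Sum>j\<le>n. g j) + (\<Sum>j\<in>{n + 1..n + n}. g j)"
    using sum.ub_add_nat[of 0 n g n] by (simp add: atLeast0AtMost mult_2)
  also have "(\<Sum>j\<le>n. g j) = (\<Sum>k\<le>n. g (n - k))"
    by (rule sum.reindex_bij_witness[where i="\<lambda>k. n - k" and j="\<lambda>k. n - k"]) auto
  also have "\<dots> = (\<Sum>k\<le>n. h k)"
    using assms(1) by (intro sum.cong) auto
  also have "(\<Sum>j\<in>{n + 1..n + n}. g j) = (\<Sum>k\<in>{1..n}. g (n + k))"
    by (rule sum.reindex_bij_witness[where i="\<lambda>k. n + k" and j="\<lambda>j. j - n"]) auto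
  also have "\<dots> = (\<Sum>k\<in>{1..n}. h k)"
    using assms(2) by (intro sum.cong) auto
  also have "\<dots> = (\<Sum>k\<le>n. h k) - h 0"
    by (simp add: sum.atMost_shift sum.atLeast1_atMost_eq)
  finally show ?thesis
    by (simp add: algebra_simps)
qed

lemma triple_product_exponent:
  fixes n k j :: nat
  assumes "k \<le> n" and "j = n - k \<or> j = n + k"
  shows "2 * (j choose 2) + (2 * n - 1) * (2 * n - j) = n * (n - 1) + (2 * n - 1) * n + k ^ 2"
proof -
  have "2 * (j choose 2) = j * (j - 1)"
    by (induction j) (auto simp: numeral_2_eq_2 algebra_simps)
  moreover have "int (j * (j - 1) + (2 * n - 1) * (2 * n - j)) = int (n * (n - 1) + (2 * n - 1) * n + k ^ 2)"
  proof (cases "n = 0")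
    case False
    have j: "int j = int n - int k \<or> int j = int n + int k" "j \<le> 2 * n"
      using assms by (auto simp: of_nat_diff)
    have "int (j * (j - 1)) = int j * (int j - 1)" "int (n * (n - 1)) = int n * (int n - 1)"
      by (cases j; cases n; simp add: algebra_simps)+
    moreover have "int ((2 * n - 1) * (2 * n - j)) = (2 * int n - 1) * (2 * int n - int j)"
      "int ((2 * n - 1) * n) = (2 * int n - 1) * int n"
      using False j(2) by (simp_all add: of_nat_diff)
    moreover have "int j * (int j - 1) + (2 * int n - 1) * (2 * int n - int j)
                   = int n * (int n - 1) + (2 * int n - 1) * int n + int k ^ 2"
      using j(1) by (elim disjE) algebra+
    ultimately show ?thesis
      by (simp only: of_nat_add of_nat_power)
  qed (use assms in simp)
  ultimately show ?thesis
    by (simp only: of_nat_eq_iff)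
qed

lemma qpoch_neg_q_q2: "qpoch (-q) (q^2) n = (\<Prod>k<n. 1 + q ^ (2 * k + 1))"
  unfolding qpoch_def by (intro prod.cong refl) (simp add: power_mult[symmetric] power_add mult_ac)

lemma triple_product_lower_half:
  fixes q :: complex
  shows "(\<Prod>i<n. q ^ (2 * n - 1) + q ^ (2 * i)) = q ^ (n * (n - 1)) * qpoch (-q) (q^2) n"
proof -
  have "(\<Prod>i<n. q ^ (2 * n - 1) + q ^ (2 * i)) = (\<Prod>i<n. q ^ (2 * i) * (1 + q ^ (2 * (n - 1 - i) + 1)))"
  proof (intro prod.cong refl)
    fix i assume "i \<in> {..<n}"
    then have "2 * n - 1 = 2 * i + (2 * (n - 1 - i) + 1)"
      by auto
    then have "q ^ (2 * n - 1) = q ^ (2 * i) * q ^ (2 * (n - 1 - i) + 1)"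
      by (metis power_add)
    then show "q ^ (2 * n - 1) + q ^ (2 * i) = q ^ (2 * i) * (1 + q ^ (2 * (n - 1 - i) + 1))"
      by (simp add: algebra_simps)
  qed
  moreover have "(\<Prod>i<n. q ^ (2 * i)) = q ^ (n * (n - 1))"
  proof -
    have "(\<Sum>i<n. 2 * i) = n * (n - 1)"
      by (induction n) (auto simp: algebra_simps)
    then show ?thesis
      by (simp add: power_sum[symmetric])
  qed
  moreover have "(\<Prod>i<n. 1 + q ^ (2 * (n - 1 - i) + 1)) = qpoch (-q) (q^2) n"
    unfolding qpoch_neg_q_q2
    by (rule prod.reindex_bij_witness[where i="\<lambda>i. n - 1 - i" and j="\<lambda>i. n - 1 - i"]) auto
  ultimately show ?thesis
    by (simp add: prod.distrib)
qed

lemma triple_product_upper_half: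
  fixes q :: complex
  assumes "n \<noteq> 0"
  shows "(\<Prod>i<n. q ^ (2 * n - 1) + q ^ (2 * (n + i))) = q ^ ((2 * n - 1) * n) * qpoch (-q) (q^2) n"
proof -
  have "(\<Prod>i<n. q ^ (2 * n - 1) + q ^ (2 * (n + i))) = (\<Prod>i<n. q ^ (2 * n - 1) * (1 + q ^ (2 * i + 1)))"
  proof (intro prod.cong refl)
    fix i
    have "2 * (n + i) = (2 * n - 1) + (2 * i + 1)"
      using assms by auto
    then have "q ^ (2 * (n + i)) = q ^ (2 * n - 1) * q ^ (2 * i + 1)"
      by (metis power_add)
    then show "q ^ (2 * n - 1) + q ^ (2 * (n + i)) = q ^ (2 * n - 1) * (1 + q ^ (2 * i + 1))"
      by (simp add: algebra_simps)
  qed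
  then show ?thesis
    unfolding qpoch_neg_q_q2 by (simp add: prod.distrib power_mult)
qed

text \<open>The \<open>q\<^sup>2\<close>-binomial theorem at \<open>x = q\<^sup>2\<^sup>n\<^sup>-\<^sup>1\<close>, \<open>y = 1\<close>, whose terms \<open>j = n \<plusminus> k\<close> agree.\<close>
lemma jacobi_triple_product_finite:
  fixes q :: complex
  assumes nz: "\<And>k. qpoch (q^2) (q^2) k \<noteq> 0"
  shows "qpoch (-q) (q^2) n ^ 2
         = 2 * (\<Sum>k\<le>n. q ^ (k^2) * qbinom (q^2) (2 * n) (n - k)) - qbinom (q^2) (2 * n) n"
proof (cases "q = 0 \<or> n = 0")
  case True
  then show ?thesis
  proof
    assume "q = 0"
    then show ?thesis
      by (simp add: qpoch_def qbinom_def power_0_left sum.atMost_shift)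
  qed (use qbinom_0[OF nz] in simp)
next
  case False
  then have "q \<noteq> 0" "n \<noteq> 0"
    by simp_all
  define x where "x = q ^ (2 * n - 1)"
  define e where "e = n * (n - 1) + (2 * n - 1) * n"
  define h where "h k = q ^ (k^2) * qbinom (q^2) (2 * n) (n - k)" for k
  define g where "g j = qbinom (q^2) (2 * n) j * (q^2) ^ (j choose 2) * 1 ^ j * x ^ (2 * n - j)" for j
  have "(\<Prod>i<2 * n. x + 1 * (q^2) ^ i) = (\<Prod>i<n. x + q ^ (2 * i)) * (\<Prod>i<n. x + q ^ (2 * (n + i)))"
    using prod.atLeastLessThan_concat[of 0 n "2 * n" "\<lambda>i. x + (q^2) ^ i"]
      prod.shift_bounds_nat_ivl[of "\<lambda>i. x + (q^2) ^ i" 0 n n]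
    by (simp add: atLeast0LessThan mult_2 add.commute power_mult[symmetric])
  also have "\<dots> = q ^ e * qpoch (-q) (q^2) n ^ 2"
    unfolding x_def triple_product_lower_half triple_product_upper_half[OF \<open>n \<noteq> 0\<close>] e_def
    by (simp add: power_add power2_eq_square mult_ac)
  finally have g_sum: "(\<Sum>j\<le>2 * n. g j) = q ^ e * qpoch (-q) (q^2) n ^ 2"
    unfolding g_def by (simp only: q_binomial_theorem[OF nz])
  have g: "g j = q ^ e * h k" if "k \<le> n" "j = n - k \<or> j = n + k" for j k
  proof -
    have "qbinom (q^2) (2 * n) j = qbinom (q^2) (2 * n) (n - k)"
      using that qbinom_symmetric[of "n - k" "2 * n" "q^2"] by (auto simp: mult_2)
    then show ?thesis
      unfolding g_def h_def x_def e_def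
      using triple_product_exponent[OF that] by (simp add: power_mult[symmetric] power_add[symmetric] ac_simps)
  qed
  have "(\<Sum>j\<le>2 * n. g j) = 2 * (\<Sum>k\<le>n. q ^ e * h k) - q ^ e * h 0"
    using g by (intro sum_double_symmetric) auto
  then have "q ^ e * qpoch (-q) (q^2) n ^ 2 = q ^ e * (2 * (\<Sum>k\<le>n. h k) - h 0)"
    using g_sum by (simp add: sum_distrib_left algebra_simps)
  then show ?thesis
    using \<open>q \<noteq> 0\<close> unfolding h_def by simp
qed

lemma jacobi_partial_sums_tendsto:
  fixes q :: complex
  assumes q: "norm q < 1"
  shows "(\<lambda>n. \<Sum>k\<le>n. q ^ (k^2) * qbinom (q^2) (2 * n) (n - k))
           \<longlonglongrightarrow> (qpoch_inf (-q) (q^2) ^ 2 + 1 / qpoch_inf (q^2) (q^2)) / 2"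
proof -
  have p: "norm (q^2) < 1"
    using q by (simp add: norm_power power_less_one_iff)
  have "(\<lambda>n. \<Sum>k\<le>n. q ^ (k^2) * qbinom (q^2) (2 * n) (n - k))
        = (\<lambda>n. (qpoch (-q) (q^2) n ^ 2 + qbinom (q^2) (2 * n) n) / 2)"
    using jacobi_triple_product_finite[of q] qpoch_nonzero[OF p] by (simp add: fun_eq_iff)
  then show ?thesis
    using qbinom_central_tendsto[OF p, of 0] by (simp only:) (intro tendsto_intros LIMSEQ_qpoch p, simp_all)
qed

theorem jacobi_triple_product_theta:
  fixes q :: complex
  assumes q: "norm q < 1"
  shows "((\<lambda>k. q ^ (k^2)) has_sum
           ((qpoch_inf (-q) (q^2) * qpoch_inf (-q) (q^2) * qpoch_inf (q^2) (q^2) + 1) / 2)) UNIV"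
proof -
  define p where "p = q^2"
  have p: "norm p < 1"
    using q by (simp add: p_def norm_power power_less_one_iff)
  define X where "X = qpoch_inf (-q) p"
  define Pi where "Pi = qpoch_inf p p"
  have Pi_nz: "Pi \<noteq> 0"
    using qpoch_inf_nonzero[OF p] by (simp add: Pi_def)
  obtain C where C: "\<And>m j. norm (qbinom p m j) \<le> C"
    using qbinom_bounded[OF p] by metis
  have "0 \<le> C"
    using C[of 0 0] norm_ge_zero order_trans by blast
  define c where "c k = q ^ (k^2) / Pi" for k
  define a where "a k n = (if k \<le> n then q ^ (k^2) * qbinom p (2 * n) (n - k) else 0)" for k n
  have "(\<lambda>n. q ^ (k^2) * qbinom p (2 * n) (n - k)) \<longlonglongrightarrow> c k" for k
    using tendsto_mult_left[OF qbinom_central_tendsto[OF p, of k], of "q ^ (k^2)"] by (simp add: c_def Pi_def)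
  then have limit: "(\<lambda>n. a k n) \<longlonglongrightarrow> c k" for k
    by (rule Lim_transform_eventually) (auto simp: a_def eventually_sequentially)
  have bound: "norm (a k n) \<le> norm q ^ k * C" for k n
  proof -
    have "norm q ^ (k^2) \<le> norm q ^ k"
      using q by (intro power_decreasing) (auto simp: power2_eq_square)
    then show ?thesis
      using C[of "2 * n" "n - k"] \<open>0 \<le> C\<close> by (auto simp: a_def norm_mult norm_power intro: mult_mono)
  qed
  have "(\<Sum>k. a k n) = (\<Sum>k\<le>n. q ^ (k^2) * qbinom p (2 * n) (n - k))" for n
    by (subst suminf_finite[of "{..n}"]) (auto simp: a_def)
  then have "(\<lambda>n. \<Sum>k. a k n) \<longlonglongrightarrow> (X ^ 2 + 1 / Pi) / 2"
    using jacobi_partial_sums_tendsto[OF q] by (simp add: X_def Pi_def p_def)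
  moreover have "summable (\<lambda>k. norm q ^ k * C)"
    using q by (intro summable_mult2 summable_geometric) simp
  ultimately have c: "c sums ((X ^ 2 + 1 / Pi) / 2)" "summable (\<lambda>k. norm (c k))"
    using sums_tannery[where M = "\<lambda>k. norm q ^ k * C", OF limit bound] by simp_all
  have "(\<lambda>k. c k * Pi) sums ((X ^ 2 + 1 / Pi) / 2 * Pi)"
    by (rule sums_mult2[OF c(1)])
  moreover have "summable (\<lambda>k. norm (c k * Pi))"
    using summable_mult2[OF c(2), of "norm Pi"] by (simp add: norm_mult)
  moreover have "(\<lambda>k. c k * Pi) = (\<lambda>k. q ^ (k^2))"
    using Pi_nz by (simp add: c_def)
  moreover have "(X ^ 2 + 1 / Pi) / 2 * Pi
                 = (qpoch_inf (-q) (q^2) * qpoch_inf (-q) (q^2) * qpoch_inf (q^2) (q^2) + 1) / 2"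
    using Pi_nz by (simp add: X_def Pi_def p_def field_simps power2_eq_square)
  ultimately show ?thesis
    by (metis norm_summable_imp_has_sum)
qed

section \<open>The double sum\<close>

lemma mult_le_sum_squares:
  fixes a b :: nat
  shows "a * b \<le> a^2 + b^2"
  by (metis add.commute le_add2 le_square linear mult_le_mono1 mult_le_mono2 order_trans power2_eq_square)

lemma le_twice_quadratic_form:
  fixes i j :: nat
  shows "i + j \<le> 2 * (i^2 + j^2 - i * j)"
proof -
  have "i * j \<le> i^2 + j^2"
    by (rule mult_le_sum_squares)
  moreover have "int i \<le> int i ^ 2" "int j \<le> int j ^ 2"
    by (metis le_square of_nat_le_iff of_nat_mult power2_eq_square)+
  moreover have "0 \<le> (int i - int j)^2"
    by simp
  ultimately have "int (i + j) \<le> int (2 * (i^2 + j^2 - i * j))"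
    by (simp add: of_nat_diff power2_eq_square algebra_simps)
  then show ?thesis
    by (simp only: of_nat_le_iff)
qed

lemma geometric_pairs_summable:
  fixes s :: real
  assumes "0 \<le> s" "s < 1"
  shows "(\<lambda>(i, j). s ^ i * s ^ j) summable_on (UNIV :: (nat \<times> nat) set)"
proof -
  have geo: "((\<lambda>j. s ^ j) has_sum (1 / (1 - s))) UNIV"
    using assms geometric_sums[of s] by (intro sums_nonneg_imp_has_sum) simp_all
  have "(\<lambda>(i, j). s ^ i * s ^ j) summable_on Sigma UNIV (\<lambda>_. UNIV)"
  proof (rule summable_on_SigmaI)
    show "((\<lambda>j. case (i, j) of (i, j) \<Rightarrow> s ^ i * s ^ j) has_sum s ^ i * (1 / (1 - s))) UNIV" for i
      using has_sum_cmult_right[OF geo, of "s ^ i"] by simp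
    show "(\<lambda>i. s ^ i * (1 / (1 - s))) summable_on UNIV"
      by (rule summable_on_cmult_left) (use geo in \<open>auto simp: summable_on_def\<close>)
  qed (use assms in auto)
  then show ?thesis
    by simp
qed

lemma pair_sum_summable:
  fixes q :: complex
  assumes q: "norm q < 1"
  shows "(\<lambda>(i, j). q ^ (i^2 + j^2 - i * j) / (qpoch q q i * qpoch q q j)) summable_on UNIV"
proof -
  define s where "s = sqrt (norm q)"
  have s: "0 \<le> s" "s < 1" "s ^ 2 = norm q"
    using q by (auto simp: s_def)
  obtain L where L: "0 < L" "\<And>k. L \<le> norm (qpoch q q k)"
    using qpoch_norm_bounds[OF q] by metis
  have "(\<lambda>x. (case x of (i, j) \<Rightarrow> s ^ i * s ^ j) * (1 / L^2)) summable_on UNIV"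
    by (rule summable_on_cmult_left[OF geometric_pairs_summable[OF s(1,2)]])
  then have "(\<lambda>x. norm (case x of (i, j) \<Rightarrow> s ^ i * s ^ j / L^2)) summable_on UNIV"
    using s(1) by (simp add: case_prod_unfold abs_mult)
  then show ?thesis
  proof (rule Infinite_Sum.abs_summable_summable[OF Infinite_Sum.abs_summable_on_comparison_test])
    fix x :: "nat \<times> nat"
    obtain i j where x: "x = (i, j)"
      by fastforce
    have "norm q ^ (i^2 + j^2 - i * j) = s ^ (2 * (i^2 + j^2 - i * j))"
      by (simp add: s(3)[symmetric] power_mult)
    also have "\<dots> \<le> s ^ i * s ^ j"
      unfolding power_add[symmetric] using s by (intro power_decreasing le_twice_quadratic_form) auto
    finally have "norm q ^ (i^2 + j^2 - i * j) \<le> s ^ i * s ^ j" .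
    moreover have "L^2 \<le> norm (qpoch q q i) * norm (qpoch q q j)"
      using L by (simp add: power2_eq_square mult_mono)
    ultimately have "norm q ^ (i^2 + j^2 - i * j) / (norm (qpoch q q i) * norm (qpoch q q j))
                     \<le> s ^ i * s ^ j / L^2"
      using L s(1) by (intro frac_le) simp_all
    then show "norm (case x of (i, j) \<Rightarrow> q ^ (i^2 + j^2 - i * j) / (qpoch q q i * qpoch q q j))
               \<le> norm (case x of (i, j) \<Rightarrow> s ^ i * s ^ j / L^2)"
      using s(1) by (simp add: x norm_mult norm_divide norm_power)
  qed
qed

lemma diagonal_split:
  shows "range (\<lambda>(d::nat, b). (b + d, b)) \<inter> range (\<lambda>(d, b). (b, b + Suc d)) = {}"
    and "range (\<lambda>(d::nat, b). (b + d, b)) \<union> range (\<lambda>(d, b). (b, b + Suc d)) = UNIV"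
proof -
  show "range (\<lambda>(d::nat, b). (b + d, b)) \<inter> range (\<lambda>(d, b). (b, b + Suc d)) = {}"
    by auto
  have "(i, j) \<in> range (\<lambda>(d, b). (b + d, b)) \<union> range (\<lambda>(d, b). (b, b + Suc d))" for i j :: nat
  proof (cases "j \<le> i")
    case True
    then have "(i, j) = (\<lambda>(d, b). (b + d, b)) (i - j, j)"
      by simp
    then show ?thesis
      by blast
  next
    case False
    then have "(i, j) = (\<lambda>(d, b). (b, b + Suc d)) (j - i - 1, i)"
      by simp
    then show ?thesis
      by blast
  qed
  then show "range (\<lambda>(d::nat, b). (b + d, b)) \<union> range (\<lambda>(d, b). (b, b + Suc d)) = UNIV"
    by auto
qed

lemma has_sum_range_durfee:
  fixes q :: complex and F :: "nat \<times> nat \<Rightarrow> complex"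
  assumes q: "norm q < 1" and F: "F summable_on UNIV" and g: "inj g"
    and Fg: "\<And>d b. F (g (d, b)) = u d * (q ^ (b * (b + e d)) / (qpoch q q b * qpoch q q (b + e d)))"
    and u: "(u has_sum T) UNIV"
  shows "(F has_sum (T / qpoch_inf q q)) (range g)"
proof -
  have "F summable_on range g"
    using F by (rule summable_on_subset_banach) simp
  then have "(F \<circ> g) summable_on Sigma UNIV (\<lambda>_. UNIV)"
    using summable_on_reindex[OF g] by auto
  then have "((F \<circ> g) has_sum (T / qpoch_inf q q)) (Sigma UNIV (\<lambda>_. UNIV))"
  proof (rule has_sum_SigmaI[rotated 2])
    show "((\<lambda>b. (F \<circ> g) (d, b)) has_sum u d * (1 / qpoch_inf q q)) UNIV" for d
      using has_sum_cmult_right[OF durfee_has_sum[OF q, of "e d"], of "u d"] by (simp add: Fg)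
    show "((\<lambda>d. u d * (1 / qpoch_inf q q)) has_sum T / qpoch_inf q q) UNIV"
      using has_sum_cmult_left[OF u, of "1 / qpoch_inf q q"] by simp
  qed
  then show ?thesis
    using has_sum_reindex[OF g] by auto
qed

definition theta_quotient :: "complex \<Rightarrow> complex" where
  "theta_quotient q = qpoch_inf (-q) (q^2) * qpoch_inf (-q) (q^2) * qpoch_inf (q^2) (q^2) / qpoch_inf q q"

lemma pair_sum_has_sum:
  fixes q :: complex
  assumes q: "norm q < 1"
  shows "((\<lambda>(i, j). q ^ (i^2 + j^2 - i * j) / (qpoch q q i * qpoch q q j)) has_sum theta_quotient q) UNIV"
proof -
  define F where "F = (\<lambda>(i::nat, j::nat). q ^ (i^2 + j^2 - i * j) / (qpoch q q i * qpoch q q j))"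
  define S where "S = (qpoch_inf (-q) (q^2) * qpoch_inf (-q) (q^2) * qpoch_inf (q^2) (q^2) + 1) / 2"
  have F: "F summable_on UNIV"
    using pair_sum_summable[OF q] by (simp add: F_def)
  have squares: "((\<lambda>k. q ^ (k^2)) has_sum S) UNIV"
    unfolding S_def by (rule jacobi_triple_product_theta[OF q])
  have "F (b + d, b) = q ^ (d^2) * (q ^ (b * (b + d)) / (qpoch q q b * qpoch q q (b + d)))" for d b
  proof -
    have "(b + d)^2 + b^2 - (b + d) * b = d^2 + b * (b + d)"
      by (simp add: power2_eq_square algebra_simps)
    then show ?thesis
      by (simp add: F_def power_add mult_ac)
  qed
  then have below: "(F has_sum (S / qpoch_inf q q)) (range (\<lambda>(d, b). (b + d, b)))"
    by (intro has_sum_range_durfee[OF q F _ _ squares, where e = id]) (auto simp: inj_def)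
  have "F (b, b + Suc d) = q ^ (Suc d ^ 2) * (q ^ (b * (b + Suc d)) / (qpoch q q b * qpoch q q (b + Suc d)))" for d b
  proof -
    have "b^2 + (b + Suc d)^2 - b * (b + Suc d) = Suc d ^ 2 + b * (b + Suc d)"
      by (simp add: power2_eq_square algebra_simps)
    then show ?thesis
      by (simp add: F_def power_add mult_ac)
  qed
  then have above: "(F has_sum ((S - 1) / qpoch_inf q q)) (range (\<lambda>(d, b). (b, b + Suc d)))"
    using has_sum_Suc_shift[OF squares]
    by (intro has_sum_range_durfee[OF q F, where e = Suc]) (auto simp: inj_def)
  have "S / qpoch_inf q q + (S - 1) / qpoch_inf q q = theta_quotient q"
    using qpoch_inf_nonzero[OF q] by (simp add: theta_quotient_def S_def field_simps)
  then show ?thesis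
    using has_sum_Un_disjoint[OF below above diagonal_split(1)] diagonal_split(2) unfolding F_def by simp
qed

section \<open>Summing out the last variable\<close>

lemma Qform_nonneg: "0 \<le> Qform l n"
proof -
  define A where "A = int (n 1) + (\<Sum>i=3..l. int (n i))"
  define B where "B = int (n 2) + (\<Sum>i=3..l. int (n i))"
  have "0 \<le> A" "0 \<le> B"
    by (simp_all add: A_def B_def sum_nonneg)
  then have "0 \<le> (A - B)^2 + A * B"
    by simp
  moreover have "A^2 - A * B + B^2 = (A - B)^2 + A * B"
    by (simp add: power2_eq_square algebra_simps)
  ultimately have "0 \<le> A^2 - A * B + B^2"
    by (simp only:)
  moreover have "0 \<le> (\<Sum>i=4..l. (int (n 1) + (\<Sum>j=i..l. int (n j))) * (int (n 2) + (\<Sum>j=i..l. int (n j))))"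
    by (intro sum_nonneg mult_nonneg_nonneg add_nonneg_nonneg) (simp_all add: sum_nonneg)
  ultimately show ?thesis
    unfolding Qform_def Let_def A_def[symmetric] B_def[symmetric] by simp
qed

lemma Qform_3:
  "Qform 3 x = int ((x 1 + x 3)^2 + (x 2 + x 3)^2 - (x 1 + x 3) * (x 2 + x 3)) + int (x 1 * x 2)"
proof -
  have "(x 1 + x 3) * (x 2 + x 3) \<le> (x 1 + x 3)^2 + (x 2 + x 3)^2"
    by (rule mult_le_sum_squares)
  moreover have "{3..3::nat} = {3}"
    by auto
  ultimately show ?thesis
    unfolding Qform_def Let_def by (simp add: of_nat_diff power2_eq_square)
qed

definition split_last :: "nat \<Rightarrow> (nat \<Rightarrow> nat) \<Rightarrow> nat \<Rightarrow> nat \<Rightarrow> nat" where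
  "split_last l y k = y(1 := y 1 - k, 2 := y 2 - k, Suc l := k)"

definition merge_last :: "nat \<Rightarrow> (nat \<Rightarrow> nat) \<Rightarrow> nat \<Rightarrow> nat" where
  "merge_last l x = restrict (x(1 := x 1 + x (Suc l), 2 := x 2 + x (Suc l))) {1..l}"

lemma Qform_split_last:
  assumes l: "3 \<le> l" and k: "k \<le> y 1" "k \<le> y 2"
  shows "Qform (Suc l) (split_last l y k) = Qform l y + int ((y 1 - k) * (y 2 - k))"
proof -
  define x where "x = split_last l y k"
  have x: "x 1 = y 1 - k" "x 2 = y 2 - k" "x (Suc l) = k" "\<And>i. 3 \<le> i \<Longrightarrow> i \<le> l \<Longrightarrow> x i = y i"
    using l by (auto simp: x_def split_last_def)
  have tail: "(\<Sum>j=i..Suc l. int (x j)) = (\<Sum>j=i..l. int (y j)) + int k" if "3 \<le> i" "i \<le> l" for i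
  proof -
    have "(\<Sum>j=i..Suc l. int (x j)) = (\<Sum>j=i..l. int (x j)) + int k"
      using that x(3) by (simp add: sum.cl_ivl_Suc)
    also have "(\<Sum>j=i..l. int (x j)) = (\<Sum>j=i..l. int (y j))"
      using that x(4) by (intro sum.cong) auto
    finally show ?thesis .
  qed
  have A: "int (x 1) + (\<Sum>i=3..Suc l. int (x i)) = int (y 1) + (\<Sum>i=3..l. int (y i))"
   and B: "int (x 2) + (\<Sum>i=3..Suc l. int (x i)) = int (y 2) + (\<Sum>i=3..l. int (y i))"
    using tail[of 3] l x k by (simp_all add: of_nat_diff)
  have "(\<Sum>i=4..Suc l. (int (x 1) + (\<Sum>j=i..Suc l. int (x j))) * (int (x 2) + (\<Sum>j=i..Suc l. int (x j))))
        = (\<Sum>i=4..l. (int (x 1) + (\<Sum>j=i..Suc l. int (x j))) * (int (x 2) + (\<Sum>j=i..Suc l. int (x j))))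
          + (int (x 1) + int k) * (int (x 2) + int k)"
    using l x(3) by (simp add: sum.cl_ivl_Suc)
  also have "(\<Sum>i=4..l. (int (x 1) + (\<Sum>j=i..Suc l. int (x j))) * (int (x 2) + (\<Sum>j=i..Suc l. int (x j))))
             = (\<Sum>i=4..l. (int (y 1) + (\<Sum>j=i..l. int (y j))) * (int (y 2) + (\<Sum>j=i..l. int (y j))))"
    using tail x k by (intro sum.cong) (auto simp: of_nat_diff)
  also have "(int (x 1) + int k) * (int (x 2) + int k) = int (y 1) * int (y 2)"
    using x k by (simp add: of_nat_diff)
  finally have S: "(\<Sum>i=4..Suc l. (int (x 1) + (\<Sum>j=i..Suc l. int (x j))) * (int (x 2) + (\<Sum>j=i..Suc l. int (x j))))
        = (\<Sum>i=4..l. (int (y 1) + (\<Sum>j=i..l. int (y j))) * (int (y 2) + (\<Sum>j=i..l. int (y j))))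
          + int (y 1) * int (y 2)" .
  show ?thesis
    unfolding x_def[symmetric] Qform_def Let_def A B S using x k by (simp add: of_nat_diff)
qed

text \<open>The exponent of the \<open>l\<close>-fold sum: the paper's form \<open>Q\<close> for \<open>l \<ge> 3\<close>, and for \<open>l = 2\<close> the form
  \<open>n\<^sub>1\<^sup>2 - n\<^sub>1 n\<^sub>2 + n\<^sub>2\<^sup>2\<close> of the first identity, which continues the same recursion.\<close>
definition qexp :: "nat \<Rightarrow> (nat \<Rightarrow> nat) \<Rightarrow> nat" where
  "qexp l n = (if l = 2 then n 1 ^ 2 + n 2 ^ 2 - n 1 * n 2 else nat (Qform l n))"

definition qterm :: "nat \<Rightarrow> complex \<Rightarrow> (nat \<Rightarrow> nat) \<Rightarrow> complex" where
  "qterm l q n = q ^ qexp l n / (\<Prod>i\<in>{1..l}. qpoch q q (n i))"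

lemma qexp_split_last:
  assumes "2 \<le> l" and "k \<le> y 1" "k \<le> y 2"
  shows "qexp (Suc l) (split_last l y k) = qexp l y + (y 1 - k) * (y 2 - k)"
proof (cases "l = 2")
  case True
  define x where "x = split_last 2 y k"
  have "x 1 + x 3 = y 1" "x 2 + x 3 = y 2" "x 1 * x 2 = (y 1 - k) * (y 2 - k)"
    using assms by (simp_all add: x_def split_last_def)
  then have "Qform 3 x = int (qexp 2 y) + int ((y 1 - k) * (y 2 - k))"
    by (simp only: Qform_3) (simp add: qexp_def)
  then have "nat (Qform 3 x) = qexp 2 y + (y 1 - k) * (y 2 - k)"
    by (metis nat_int of_nat_add)
  then show ?thesis
    using True by (simp add: qexp_def x_def)
next
  case False
  then have "Qform (Suc l) (split_last l y k) = Qform l y + int ((y 1 - k) * (y 2 - k))"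
    using assms by (intro Qform_split_last) auto
  moreover have "Suc l \<noteq> 2"
    using assms by simp
  ultimately show ?thesis
    using False Qform_nonneg[of l y]
    by (simp only: qexp_def if_False nat_add_distrib[OF _ of_nat_0_le_iff] nat_int)
qed

lemma merge_last_split_last:
  assumes "2 \<le> l" and "y \<in> Pi\<^sub>E {1..l} (\<lambda>_. UNIV)" and "k \<le> min (y 1) (y 2)"
  shows "merge_last l (split_last l y k) = y"
proof (rule ext)
  fix i
  show "merge_last l (split_last l y k) i = y i"
  proof (cases "i \<in> {1..l}")
    case False
    then show ?thesis
      using PiE_arb[OF assms(2) False] False by (auto simp: merge_last_def)
  qed (use assms(1,3) in \<open>auto simp: merge_last_def split_last_def\<close>)
qed

lemma split_last_merge_last:
  assumes "2 \<le> l" and "x \<in> Pi\<^sub>E {1..Suc l} (\<lambda>_. UNIV)"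
  shows "split_last l (merge_last l x) (x (Suc l)) = x"
proof (rule ext)
  fix i
  show "split_last l (merge_last l x) (x (Suc l)) i = x i"
  proof (cases "i \<in> {1..Suc l}")
    case False
    then show ?thesis
      using PiE_arb[OF assms(2) False] assms(1) by (auto simp: merge_last_def split_last_def)
  qed (use assms(1) in \<open>auto simp: merge_last_def split_last_def\<close>)
qed

lemma split_last_PiE:
  assumes "2 \<le> l" and "y \<in> Pi\<^sub>E {1..l} (\<lambda>_. UNIV)"
  shows "split_last l y k \<in> Pi\<^sub>E {1..Suc l} (\<lambda>_. UNIV)"
proof -
  have "y i = undefined" if "i \<notin> {1..l}" for i
    using PiE_arb[OF assms(2) that] .
  then show ?thesis
    using assms(1) unfolding PiE_iff extensional_def split_last_def by auto
qed

lemma fiber_merge_last: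
  assumes "2 \<le> l" and "y \<in> Pi\<^sub>E {1..l} (\<lambda>_. UNIV)"
  shows "{x \<in> Pi\<^sub>E {1..Suc l} (\<lambda>_. UNIV). merge_last l x = y} = split_last l y ` {..min (y 1) (y 2)}"
proof (intro equalityI subsetI)
  fix x assume "x \<in> {x \<in> Pi\<^sub>E {1..Suc l} (\<lambda>_. UNIV). merge_last l x = y}"
  then have x: "x \<in> Pi\<^sub>E {1..Suc l} (\<lambda>_. UNIV)" "merge_last l x = y"
    by auto
  have "y 1 = x 1 + x (Suc l)" "y 2 = x 2 + x (Suc l)"
    using fun_cong[OF x(2), of 1] fun_cong[OF x(2), of 2] assms(1) by (simp_all add: merge_last_def)
  then have "x (Suc l) \<in> {..min (y 1) (y 2)}"
    by simp
  then show "x \<in> split_last l y ` {..min (y 1) (y 2)}"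
    using split_last_merge_last[OF assms(1) x(1)] x(2) by (metis image_eqI)
next
  fix x assume "x \<in> split_last l y ` {..min (y 1) (y 2)}"
  then obtain k where "k \<le> min (y 1) (y 2)" and x: "x = split_last l y k"
    by auto
  then show "x \<in> {x \<in> Pi\<^sub>E {1..Suc l} (\<lambda>_. UNIV). merge_last l x = y}"
    using merge_last_split_last[OF assms] split_last_PiE[OF assms] by simp
qed

lemma inj_split_last: "inj (split_last l y)"
  by (rule injI) (metis fun_upd_same split_last_def)

lemma prod_split_first_two:
  fixes f :: "nat \<Rightarrow> 'a::comm_monoid_mult"
  assumes "2 \<le> l"
  shows "(\<Prod>i\<in>{1..l}. f i) = f 1 * f 2 * (\<Prod>i\<in>{3..l}. f i)"
proof -
  have "{1..l} = insert 1 (insert 2 {3..l})"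
    using assms by auto
  then show ?thesis
    by (simp add: mult.assoc)
qed

lemma sum_qterm_fiber:
  fixes q :: complex
  assumes q: "norm q < 1" and l: "2 \<le> l" and y: "y \<in> Pi\<^sub>E {1..l} (\<lambda>_. UNIV)"
  shows "(\<Sum>x\<in>{x \<in> Pi\<^sub>E {1..Suc l} (\<lambda>_. UNIV). merge_last l x = y}. qterm (Suc l) q x) = qterm l q y"
proof -
  let ?P = "qpoch q q"
  define W where "W = (\<Prod>i\<in>{3..l}. ?P (y i))"
  have summand: "qterm (Suc l) q (split_last l y k)
              = q ^ qexp l y / W * (q ^ ((y 1 - k) * (y 2 - k)) / (?P (y 1 - k) * ?P (y 2 - k) * ?P k))"
    if "k \<le> min (y 1) (y 2)" for k
  proof -
    let ?x = "split_last l y k"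
    have x: "?x 1 = y 1 - k" "?x 2 = y 2 - k" "?x (Suc l) = k" "\<And>i. i \<in> {3..l} \<Longrightarrow> ?x i = y i"
      using l by (auto simp: split_last_def)
    have "(\<Prod>i\<in>{1..Suc l}. ?P (?x i)) = ?P (?x 1) * ?P (?x 2) * (\<Prod>i\<in>{3..Suc l}. ?P (?x i))"
      using l by (intro prod_split_first_two) simp
    also have "(\<Prod>i\<in>{3..Suc l}. ?P (?x i)) = (\<Prod>i\<in>{3..l}. ?P (?x i)) * ?P (?x (Suc l))"
      using l by (simp add: prod.cl_ivl_Suc)
    also have "(\<Prod>i\<in>{3..l}. ?P (?x i)) = W"
      unfolding W_def using x(4) by (intro prod.cong) simp_all
    finally have "(\<Prod>i\<in>{1..Suc l}. ?P (?x i)) = ?P (y 1 - k) * ?P (y 2 - k) * (W * ?P k)"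
      unfolding x(1-3) .
    then show ?thesis
      using l that by (simp add: qterm_def qexp_split_last power_add mult_ac)
  qed
  have "(\<Sum>x\<in>{x \<in> Pi\<^sub>E {1..Suc l} (\<lambda>_. UNIV). merge_last l x = y}. qterm (Suc l) q x)
        = (\<Sum>k\<le>min (y 1) (y 2). qterm (Suc l) q (split_last l y k))"
    unfolding fiber_merge_last[OF l y] by (simp add: sum.reindex inj_on_subset[OF inj_split_last])
  also have "\<dots> = q ^ qexp l y / W *
      (\<Sum>k\<le>min (y 1) (y 2). q ^ ((y 1 - k) * (y 2 - k)) / (?P (y 1 - k) * ?P (y 2 - k) * ?P k))"
    unfolding sum_distrib_left by (intro sum.cong refl) (simp add: summand)
  also have "\<dots> = q ^ qexp l y / W * (1 / (?P (y 1) * ?P (y 2)))"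
    by (simp only: sum_qpoch_rectangle[OF qpoch_nonzero[OF q]])
  also have "\<dots> = qterm l q y"
    unfolding qterm_def W_def prod_split_first_two[OF l] by (simp add: mult_ac)
  finally show ?thesis .
qed

lemma norm_qterm_le:
  fixes q :: complex
  assumes q: "norm q < 1"
  shows "norm (qterm l q n) \<le> Re (qterm l (of_real (norm q)) n)"
proof -
  define r where "r = norm q"
  define R where "R k = (\<Prod>j<k. 1 - r * r ^ j)" for k
  have r: "r * r ^ j < 1" for j
    using q power_less_one_iff[of r "Suc j"] by (simp add: r_def)
  have R_pos: "0 < R k" for k
    using r by (auto simp: R_def intro: prod_pos)
  have R_le: "R k \<le> norm (qpoch q q k)" for k
  proof -
    have "R k \<le> (\<Prod>j<k. norm (1 - q * q ^ j))"
      unfolding R_def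
    proof (rule prod_mono)
      fix j
      show "0 \<le> 1 - r * r ^ j \<and> 1 - r * r ^ j \<le> norm (1 - q * q ^ j)"
        using r[of j] norm_triangle_ineq2[of 1 "q * q ^ j"] by (simp add: r_def norm_mult norm_power)
    qed
    then show ?thesis
      by (simp add: qpoch_def prod_norm)
  qed
  have "norm (qterm l q n) = r ^ qexp l n / (\<Prod>i\<in>{1..l}. norm (qpoch q q (n i)))"
    by (simp add: qterm_def r_def norm_divide norm_power prod_norm)
  also have "\<dots> \<le> r ^ qexp l n / (\<Prod>i\<in>{1..l}. R (n i))"
    using R_pos R_le qpoch_nonzero[OF q]
    by (intro divide_left_mono prod_mono prod_pos mult_pos_pos) (auto simp: r_def intro: less_imp_le less_le_trans)
  also have "\<dots> = Re (qterm l (of_real r) n)"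
  proof -
    have "qpoch (of_real r) (of_real r) k = of_real (R k)" for k
      by (simp add: qpoch_def R_def)
    then show ?thesis
      by (simp add: qterm_def flip: of_real_prod)
  qed
  finally show ?thesis
    by (simp add: r_def)
qed

text \<open>The terms at \<open>|q|\<close> dominate those at \<open>q\<close>, and their fibre sums and total are known from the
  same identities at \<open>|q|\<close>.\<close>
lemma qterm_has_sum_Suc:
  fixes q :: complex
  assumes l: "2 \<le> l"
    and IH: "\<And>q::complex. norm q < 1 \<Longrightarrow> (qterm l q has_sum theta_quotient q) (Pi\<^sub>E {1..l} (\<lambda>_. UNIV))"
    and q: "norm q < 1"
  shows "(qterm (Suc l) q has_sum theta_quotient q) (Pi\<^sub>E {1..Suc l} (\<lambda>_. UNIV))"
proof -
  define c where "c = complex_of_real (norm q)"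
  have c: "norm c < 1"
    using q by (simp add: c_def)
  show ?thesis
  proof (rule has_sum_fiberwise[where h = "merge_last l" and B = "Pi\<^sub>E {1..l} (\<lambda>_. UNIV)"
        and g = "qterm l q" and M = "\<lambda>x. Re (qterm (Suc l) c x)" and G = "\<lambda>y. Re (qterm l c y)"])
    show "merge_last l x \<in> Pi\<^sub>E {1..l} (\<lambda>_. UNIV)" for x
      by (simp add: merge_last_def)
    fix y :: "nat \<Rightarrow> nat"
    assume y: "y \<in> Pi\<^sub>E {1..l} (\<lambda>_. UNIV)"
    show "finite {x \<in> Pi\<^sub>E {1..Suc l} (\<lambda>_. UNIV). merge_last l x = y}"
      unfolding fiber_merge_last[OF l y] by simp
    show "(\<Sum>x\<in>{x \<in> Pi\<^sub>E {1..Suc l} (\<lambda>_. UNIV). merge_last l x = y}. qterm (Suc l) q x) = qterm l q y"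
      by (rule sum_qterm_fiber[OF q l y])
    show "(\<Sum>x\<in>{x \<in> Pi\<^sub>E {1..Suc l} (\<lambda>_. UNIV). merge_last l x = y}. Re (qterm (Suc l) c x))
          = Re (qterm l c y)"
      by (simp only: Re_sum[symmetric] sum_qterm_fiber[OF c l y])
  next
    show "(\<lambda>y. Re (qterm l c y)) summable_on Pi\<^sub>E {1..l} (\<lambda>_. UNIV)"
      using IH[OF c] by (intro summable_on_Re) (auto simp: summable_on_def)
    show "norm (qterm (Suc l) q x) \<le> Re (qterm (Suc l) c x)" for x
      unfolding c_def by (rule norm_qterm_le[OF q])
    show "(qterm l q has_sum theta_quotient q) (Pi\<^sub>E {1..l} (\<lambda>_. UNIV))"
      by (rule IH[OF q])
  qed
qed

lemma bij_betw_PiE_pairs: "bij_betw (\<lambda>n. (n 1, n 2)) (Pi\<^sub>E {1..2::nat} (\<lambda>_. UNIV)) UNIV"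
proof (rule bij_betwI[where g = "\<lambda>(a, b) i. if i = 1 then a else if i = 2 then b else undefined"])
  show "(\<lambda>(a, b) i. if i = 1 then a else if i = 2 then b else undefined) \<in> UNIV \<rightarrow> Pi\<^sub>E {1..2::nat} (\<lambda>_. UNIV)"
    by (auto simp: PiE_iff extensional_def)
  show "(\<lambda>(a, b) i. if i = 1 then a else if i = 2 then b else undefined) (n 1, n 2) = n"
    if "n \<in> Pi\<^sub>E {1..2::nat} (\<lambda>_. UNIV)" for n :: "nat \<Rightarrow> 'a"
  proof (rule ext)
    fix i :: nat
    have "i \<in> {1..2} \<longleftrightarrow> i = 1 \<or> i = 2"
      by auto
    then show "(\<lambda>(a, b) i. if i = 1 then a else if i = 2 then b else undefined) (n 1, n 2) i = n i"
      using PiE_arb[OF that, of i] by auto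
  qed
qed auto

lemma bij_betw_PiE_triples: "bij_betw (\<lambda>n. (n 1, n 2, n 3)) (Pi\<^sub>E {1..3::nat} (\<lambda>_. UNIV)) UNIV"
proof (rule bij_betwI[where g = "\<lambda>(a, b, c) i. if i = 1 then a else if i = 2 then b else if i = 3 then c else undefined"])
  show "(\<lambda>(a, b, c) i. if i = 1 then a else if i = 2 then b else if i = 3 then c else undefined)
        \<in> UNIV \<rightarrow> Pi\<^sub>E {1..3::nat} (\<lambda>_. UNIV)"
    by (auto simp: PiE_iff extensional_def)
  show "(\<lambda>(a, b, c) i. if i = 1 then a else if i = 2 then b else if i = 3 then c else undefined) (n 1, n 2, n 3) = n"
    if "n \<in> Pi\<^sub>E {1..3::nat} (\<lambda>_. UNIV)" for n :: "nat \<Rightarrow> 'a"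
  proof (rule ext)
    fix i :: nat
    have "i \<in> {1..3} \<longleftrightarrow> i = 1 \<or> i = 2 \<or> i = 3"
      by auto
    then show "(\<lambda>(a, b, c) i. if i = 1 then a else if i = 2 then b else if i = 3 then c else undefined)
                 (n 1, n 2, n 3) i = n i"
      using PiE_arb[OF that, of i] by auto
  qed
qed auto

lemma qterm_has_sum:
  fixes q :: complex
  assumes "2 \<le> l" and "norm q < 1"
  shows "(qterm l q has_sum theta_quotient q) (Pi\<^sub>E {1..l} (\<lambda>_. UNIV))"
  using assms
proof (induction l arbitrary: q rule: dec_induct)
  case base
  define F where "F = (\<lambda>(i, j). q ^ (i^2 + j^2 - i * j) / (qpoch q q i * qpoch q q j))"
  have "{1..2::nat} = {1, 2}"
    by auto
  then have "qterm 2 q = (\<lambda>n. F (n 1, n 2))"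
    by (auto simp: qterm_def qexp_def F_def)
  moreover have "((\<lambda>n. F (n 1, n 2)) has_sum theta_quotient q) (Pi\<^sub>E {1..2::nat} (\<lambda>_. UNIV))"
    unfolding has_sum_reindex_bij_betw[OF bij_betw_PiE_pairs] F_def by (rule pair_sum_has_sum[OF base])
  ultimately show ?case
    by simp
next
  case (step l)
  then show ?case
    using qterm_has_sum_Suc by blast
qed

lemma qterm_3:
  "qterm 3 q = (\<lambda>n. q ^ (n 1 ^ 2 + n 2 ^ 2 + n 3 ^ 2 + n 1 * n 3 + n 2 * n 3)
                      / (qpoch q q (n 1) * qpoch q q (n 2) * qpoch q q (n 3)))"
proof
  fix n :: "nat \<Rightarrow> nat"
  have "(n 1 + n 3) * (n 2 + n 3) \<le> (n 1 + n 3)^2 + (n 2 + n 3)^2"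
    by (rule mult_le_sum_squares)
  then have Q: "Qform 3 n = int (n 1 ^ 2 + n 2 ^ 2 + n 3 ^ 2 + n 1 * n 3 + n 2 * n 3)"
    by (simp add: Qform_3 of_nat_diff power2_eq_square algebra_simps)
  have "qexp 3 n = n 1 ^ 2 + n 2 ^ 2 + n 3 ^ 2 + n 1 * n 3 + n 2 * n 3"
    unfolding qexp_def Q nat_int by simp
  moreover have "{1..3::nat} = {1, 2, 3}"
    by auto
  ultimately show "qterm 3 q n = q ^ (n 1 ^ 2 + n 2 ^ 2 + n 3 ^ 2 + n 1 * n 3 + n 2 * n 3)
                                 / (qpoch q q (n 1) * qpoch q q (n 2) * qpoch q q (n 3))"
    unfolding qterm_def by (simp add: mult_ac)
qed

lemma qterm_eq_Qform:
  assumes "l \<noteq> 2"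
  shows "qterm l q = (\<lambda>n. q powi Qform l n / (\<Prod>i\<in>{1..l}. qpoch q q (n i)))"
  using assms Qform_nonneg by (simp add: fun_eq_iff qterm_def qexp_def power_int_def)

lemma powi_pair_exponent:
  fixes i j :: nat
  shows "q powi (int i ^ 2 - int i * int j + int j ^ 2) = q ^ (i^2 + j^2 - i * j)"
proof -
  have "i * j \<le> i^2 + j^2"
    by (rule mult_le_sum_squares)
  then have "int i ^ 2 - int i * int j + int j ^ 2 = int (i^2 + j^2 - i * j)"
    by (simp add: of_nat_diff)
  then show ?thesis
    by (simp add: power_int_of_nat)
qed

theorem corollary1p2:
  fixes q :: complex
  assumes "norm q < 1"
  shows "((\<lambda>(i,j). q powi (int i ^ 2 - int i * int j + int j ^ 2) /
             (qpoch q q i * qpoch q q j))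
          has_sum (qpoch_inf (-q) (q^2) * qpoch_inf (-q) (q^2) * qpoch_inf (q^2) (q^2)
                   / qpoch_inf q q)) UNIV
    \<and> ((\<lambda>(i,j,k). q ^ (i^2 + j^2 + k^2 + i*k + j*k) /
             (qpoch q q i * qpoch q q j * qpoch q q k))
          has_sum (qpoch_inf (-q) (q^2) * qpoch_inf (-q) (q^2) * qpoch_inf (q^2) (q^2)
                   / qpoch_inf q q)) UNIV
    \<and> (\<forall>l::nat. l \<ge> 4 \<longrightarrow>
          ((\<lambda>n. q powi (Qform l n) / (\<Prod>i\<in>{1..l}. qpoch q q (n i)))
          has_sum (qpoch_inf (-q) (q^2) * qpoch_inf (-q) (q^2) * qpoch_inf (q^2) (q^2)
                   / qpoch_inf q q)) (Pi\<^sub>E {1..l} (\<lambda>_. UNIV)))"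
  unfolding theta_quotient_def[symmetric]
proof (intro conjI allI impI)
  show "((\<lambda>(i, j). q powi (int i ^ 2 - int i * int j + int j ^ 2) / (qpoch q q i * qpoch q q j))
         has_sum theta_quotient q) UNIV"
    using pair_sum_has_sum[OF assms] by (simp add: powi_pair_exponent)
  have "(qterm 3 q has_sum theta_quotient q) (Pi\<^sub>E {1..3} (\<lambda>_. UNIV))"
    using qterm_has_sum[OF _ assms] by simp
  then show "((\<lambda>(i, j, k). q ^ (i^2 + j^2 + k^2 + i * k + j * k) / (qpoch q q i * qpoch q q j * qpoch q q k))
              has_sum theta_quotient q) UNIV"
    unfolding has_sum_reindex_bij_betw[OF bij_betw_PiE_triples, symmetric] qterm_3 by simp
  fix l :: nat
  assume "4 \<le> l"
  then show "((\<lambda>n. q powi Qform l n / (\<Prod>i\<in>{1..l}. qpoch q q (n i))) has_sum theta_quotient q)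
              (Pi\<^sub>E {1..l} (\<lambda>_. UNIV))"
    using qterm_has_sum[OF _ assms, of l] by (simp add: qterm_eq_Qform)
qed

end
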